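(* Let $f:(\mathbb C^n,S)\to(\mathbb C^p,0)$ admit a one-parameter stable unfolding $F(x,\lambda)=(f_\lambda(x),\lambda)$, let $\phi:(\mathbb C,0)\to(\mathbb C,0)$ be a holomorphic germ, and let $Af(x,z)=(f_{\phi(z)}(x),z)$ be the augmentation of $f$ by $F$ and $\phi$. Let $H$ be a defining equation of the discriminant $\Delta(F)\subset(\mathbb C^p\times\mathbb C,0)$ and $h(X,Z)=H(X,\phi(Z))$ the corresponding defining equation of $\Delta(Af)$. For $\eta=\sum_{i=1}^p\eta_i(X,\Lambda)\partial/\partial X_i+\eta_{p+1}(X,\Lambda)\partial/\partial\Lambda\in\theta_{p+1}$ set $$\widetilde\eta(X,Z)=\sum_{i=1}^p\eta_i(X,\phi(Z))\phi'(Z)\frac{\partial}{\partial X_i}+\eta_{p+1}(X,\phi(Z))\frac{\partial}{\partial Z}.$$ If $\eta\in\operatorname{Derlog}(\Delta(F))$, then $\widetilde\eta\in\operatorname{Derlog}(\Delta(Af))$. Furthermore, if in addition $\eta_{p+1}(X,0)=0$, then $\widetilde\eta$ is divisible by $\phi'$ and $\widetilde\eta/\phi'\in\operatorname{Derlog}(\Delta(Af))$.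
   Context: All germs are holomorphic. A one-parameter unfolding of $f$ is a germ $F(x,\lambda)=(f_\lambda(x),\lambda)$ with $f_0=f$; it is stable if $\theta(F)=tF(\theta_{n+1})+wF(\theta_{p+1})$. The discriminant $\Delta(g)$ of a map-germ $g$ is the image of its non-submersive points. Here $\Delta(F)$ is assumed to be a hypersurface with defining equation $H$, coordinates on the target of $F$ are $(X,\Lambda)$ and on the target of $Af$ are $(X,Z)$; $\operatorname{Derlog}(\Delta(F))=\{\eta\in\theta_{p+1}:\eta(H)\in H\mathcal O_{p+1}\}$ and $\operatorname{Derlog}(\Delta(Af))=\{\xi\in\theta_{p+1}:\xi(h)\in h\mathcal O_{p+1}\}$ (vector fields tangent to the discriminant). *)

theory Defs
  imports "HOL-Analysis.Analysis"
begin

definition cscale :: "complex \<Rightarrow> ((complex^'m) \<times> complex) \<Rightarrow> ((complex^'m) \<times> complex)" where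
  "cscale c v = ((\<chi> i. c * fst v $ i), c * snd v)"

definition cdiff_at :: "((complex^'m) \<times> complex \<Rightarrow> complex) \<Rightarrow> (complex^'m) \<times> complex \<Rightarrow> bool" where
  "cdiff_at g x \<longleftrightarrow> (\<exists>D. (g has_derivative D) (at x) \<and> (\<forall>c v. D (cscale c v) = c * D v))"

definition holo_on :: "((complex^'m) \<times> complex) set \<Rightarrow> ((complex^'m) \<times> complex \<Rightarrow> complex) \<Rightarrow> bool" where
  "holo_on U g \<longleftrightarrow> open U \<and> (\<forall>x\<in>U. cdiff_at g x)"

definition hgerm :: "(complex^'m) \<times> complex \<Rightarrow> ((complex^'m) \<times> complex \<Rightarrow> complex) \<Rightarrow> bool" where
  "hgerm a g \<longleftrightarrow> (\<exists>U. a \<in> U \<and> holo_on U g)"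

definition hvgerm :: "(complex^'m) \<times> complex \<Rightarrow> ((complex^'m) \<times> complex \<Rightarrow> (complex^'k) \<times> complex) \<Rightarrow> bool" where
  "hvgerm a G \<longleftrightarrow> (\<forall>i. hgerm a (\<lambda>x. fst (G x) $ i)) \<and> hgerm a (\<lambda>x. snd (G x))"

definition pdX :: "((complex^'p) \<times> complex \<Rightarrow> complex) \<Rightarrow> 'p \<Rightarrow> (complex^'p) \<times> complex \<Rightarrow> complex" where
  "pdX H i x = deriv (\<lambda>t. H ((\<chi> j. if j = i then t else fst x $ j), snd x)) (fst x $ i)"

definition pdL :: "((complex^'p) \<times> complex \<Rightarrow> complex) \<Rightarrow> (complex^'p) \<times> complex \<Rightarrow> complex" where
  "pdL H x = deriv (\<lambda>t. H (fst x, t)) (snd x)"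

definition vf_act :: "((complex^'p) \<times> complex \<Rightarrow> (complex^'p) \<times> complex) \<Rightarrow> ((complex^'p) \<times> complex \<Rightarrow> complex)
     \<Rightarrow> (complex^'p) \<times> complex \<Rightarrow> complex" where
  "vf_act eta H x = (\<Sum>i\<in>UNIV. fst (eta x) $ i * pdX H i x) + snd (eta x) * pdL H x"

definition Derlog :: "((complex^'p) \<times> complex \<Rightarrow> complex) \<Rightarrow> ((complex^'p) \<times> complex \<Rightarrow> (complex^'p) \<times> complex) \<Rightarrow> bool" where
  "Derlog H eta \<longleftrightarrow> hvgerm 0 eta \<and>
     (\<exists>a. hgerm 0 a \<and> (\<forall>\<^sub>F x in nhds 0. vf_act eta H x = a x * H x))"

definition unf :: "(complex^'n \<Rightarrow> complex \<Rightarrow> complex^'p) \<Rightarrow> (complex^'n) \<times> complex \<Rightarrow> (complex^'p) \<times> complex" where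
  "unf fam y = (fam (fst y) (snd y), snd y)"

definition nonsubm :: "((complex^'n) \<times> complex \<Rightarrow> (complex^'p) \<times> complex) \<Rightarrow> (complex^'n) \<times> complex \<Rightarrow> bool" where
  "nonsubm F y \<longleftrightarrow> range (frechet_derivative F (at y)) \<noteq> UNIV"

text \<open>Stability of the multigerm F : (C^n x C, S x {0}) \<rightarrow> (C^p x C, 0):
  theta(F) = tF(theta_{n+1}) + wF(theta_{p+1}).\<close>
definition stable_multigerm :: "(complex^'n) set \<Rightarrow> ((complex^'n) \<times> complex \<Rightarrow> (complex^'p) \<times> complex) \<Rightarrow> bool" where
  "stable_multigerm S F \<longleftrightarrow>
     (\<forall>\<xi> :: complex^'n \<Rightarrow> ((complex^'n) \<times> complex \<Rightarrow> (complex^'p) \<times> complex).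
        (\<forall>s\<in>S. hvgerm (s, 0) (\<xi> s)) \<longrightarrow>
        (\<exists>(a :: complex^'n \<Rightarrow> ((complex^'n) \<times> complex \<Rightarrow> (complex^'n) \<times> complex))
           (b :: (complex^'p) \<times> complex \<Rightarrow> (complex^'p) \<times> complex).
           (\<forall>s\<in>S. hvgerm (s, 0) (a s)) \<and> hvgerm 0 b \<and>
           (\<forall>s\<in>S. \<forall>\<^sub>F y in nhds (s, 0). \<xi> s y = frechet_derivative F (at y) (a s y) + b (F y))))"

definition vanishes_on_disc :: "(complex^'n) set \<Rightarrow> ((complex^'n) \<times> complex \<Rightarrow> (complex^'p) \<times> complex)
     \<Rightarrow> ((complex^'p) \<times> complex \<Rightarrow> complex) \<Rightarrow> bool" where
  "vanishes_on_disc S F g \<longleftrightarrow>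
     (\<exists>W. open W \<and> S \<times> {0} \<subseteq> W \<and> (\<forall>y\<in>W. nonsubm F y \<longrightarrow> g (F y) = 0))"

text \<open>H is a (reduced) defining equation of the hypersurface germ Delta(F):
  H generates the ideal of holomorphic germs vanishing on Delta(F), and Delta(F) is a hypersurface
  (H vanishes at 0 and is not the zero germ).\<close>
definition defining_eq_disc :: "(complex^'n) set \<Rightarrow> ((complex^'n) \<times> complex \<Rightarrow> (complex^'p) \<times> complex)
     \<Rightarrow> ((complex^'p) \<times> complex \<Rightarrow> complex) \<Rightarrow> bool" where
  "defining_eq_disc S F H \<longleftrightarrow> hgerm 0 H \<and> H 0 = 0 \<and> \<not> (\<forall>\<^sub>F x in nhds 0. H x = 0) \<and>
     vanishes_on_disc S F H \<and>
     (\<forall>g. hgerm 0 g \<and> vanishes_on_disc S F g \<longrightarrow>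
        (\<exists>u. hgerm 0 u \<and> (\<forall>\<^sub>F x in nhds 0. g x = u x * H x)))"

end

theory Submission
  imports Defs "HOL-Complex_Analysis.Complex_Analysis"
begin

text \<open>Write \<open>\<Phi>(X, Z) = (X, \<phi> Z)\<close>, so that \<open>h = H \<circ> \<Phi>\<close>. By the chain rule
  \<open>\<partial>h/\<partial>X\<^sub>i = (\<partial>H/\<partial>X\<^sub>i) \<circ> \<Phi>\<close> and \<open>\<partial>h/\<partial>Z = \<phi>' \<cdot> (\<partial>H/\<partial>\<Lambda>) \<circ> \<Phi>\<close>, hence
  \<open>\<eta>\<^sup>~(h) = \<phi>' \<cdot> \<eta>(H) \<circ> \<Phi> = (\<phi>' \<cdot> a \<circ> \<Phi>) h\<close> whenever \<open>\<eta>(H) = a H\<close>.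
  If moreover \<open>\<eta>\<^sub>p\<^sub>+\<^sub>1\<close> vanishes on \<open>\<Lambda> = 0\<close>, Hadamard's lemma gives \<open>\<eta>\<^sub>p\<^sub>+\<^sub>1 = \<Lambda> b\<close>,
  and since \<open>\<phi>(0) = 0\<close> one has \<open>\<phi> = \<phi>' g\<close> near \<open>0\<close> with \<open>g\<close> holomorphic. Then
  \<open>\<eta>\<^sup>~ = \<phi>' \<xi>\<close> with \<open>\<xi> = (\<eta>\<^sub>X \<circ> \<Phi>, g \<cdot> b \<circ> \<Phi>)\<close>, and \<open>\<xi>(h) = \<eta>(H) \<circ> \<Phi> = (a \<circ> \<Phi>) h\<close>.
  Holomorphic germs are given here by pointwise complex Frechet differentiability, so Hadamard's
  lemma needs differentiation under the integral sign, and with it the continuity of derivatives,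
  which comes from Cauchy's integral formula on complex lines.\<close>

section \<open>Complex differentiability in several variables\<close>

lemma cscale_eq: "cscale c v = (c *s fst v, c * snd v)"
  by (simp add: cscale_def vector_scalar_mult_def)

lemma cscale_Pair: "cscale c (a, b) = (c *s a, c * b)"
  by (simp add: cscale_eq)

lemma cscale_fst [simp]: "fst (cscale c v) = c *s fst v"
  by (simp add: cscale_eq)

lemma cscale_snd [simp]: "snd (cscale c v) = c * snd v"
  by (simp add: cscale_eq)

lemma cscale_zero_left [simp]: "cscale 0 v = 0"
  by (simp add: cscale_eq zero_prod_def vector_scalar_mult_def zero_vec_def)

lemma norm_vector_scalar_mult: "norm (c *s (X::complex^'m)) = norm c * norm X"
  unfolding norm_vec_def vector_scalar_mult_def
  by (simp add: L2_set_right_distrib norm_mult)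

lemma norm_cscale: "norm (cscale c v) = norm c * norm v"
proof -
  have "norm (cscale c v) = sqrt ((norm c)^2 * ((norm (fst v))^2 + (norm (snd v))^2))"
    unfolding cscale_eq norm_Pair
    by (simp add: norm_vector_scalar_mult norm_mult power_mult_distrib distrib_left)
  also have "\<dots> = norm c * norm v"
    by (simp add: real_sqrt_mult norm_Pair[of "fst v" "snd v", simplified])
  finally show ?thesis .
qed

lemma bounded_linear_cscale_left: "bounded_linear (\<lambda>c. cscale c v)"
  using norm_cscale[of _ v]
  by (intro bounded_linear_intro[where K="norm v"])
     (auto simp: cscale_def vec_eq_iff algebra_simps mult_scaleR_left)

lemma cdiffI: "(g has_derivative D) (at x) \<Longrightarrow> (\<And>c v. D (cscale c v) = c * D v) \<Longrightarrow> cdiff_at g x"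
  by (auto simp: cdiff_at_def)

lemma cdiff_has_derivative:
  "cdiff_at g x \<Longrightarrow> (g has_derivative frechet_derivative g (at x)) (at x)"
  unfolding cdiff_at_def by (metis frechet_derivative_at)

lemma cdiff_frechet_derivative_cscale:
  "cdiff_at g x \<Longrightarrow> frechet_derivative g (at x) (cscale c v) = c * frechet_derivative g (at x) v"
  unfolding cdiff_at_def by (metis frechet_derivative_at)

lemma cdiff_isCont: "cdiff_at g x \<Longrightarrow> isCont g x"
  using cdiff_has_derivative has_derivative_continuous by blast

lemma cdiff_transform_open:
  assumes "cdiff_at f x" "open V" "x \<in> V" "\<And>y. y \<in> V \<Longrightarrow> f y = g y"
  shows "cdiff_at g x"
  using assms has_derivative_transform_within_open unfolding cdiff_at_def by metis

lemma cdiff_const: "cdiff_at (\<lambda>_. c) x"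
  by (rule cdiffI[OF has_derivative_const]) simp

lemma cdiff_snd: "cdiff_at snd x"
  by (rule cdiffI[OF has_derivative_snd[OF has_derivative_ident]]) (simp add: cscale_eq)

lemma cdiff_mult: "cdiff_at f x \<Longrightarrow> cdiff_at g x \<Longrightarrow> cdiff_at (\<lambda>x. f x * g x) x"
  by (rule cdiffI[OF has_derivative_mult[OF cdiff_has_derivative cdiff_has_derivative]])
     (simp_all add: cdiff_frechet_derivative_cscale algebra_simps)

lemma cdiff_compose_field:
  assumes "g field_differentiable at (f x)" "cdiff_at f x"
  shows "cdiff_at (\<lambda>x. g (f x)) x"
proof -
  from assms(1) obtain g' where g': "(g has_field_derivative g') (at (f x))"
    by (auto simp: field_differentiable_def)
  show ?thesis
    by (rule cdiffI[OF has_derivative_compose[OF cdiff_has_derivative[OF assms(2)]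
          g'[unfolded has_field_derivative_def]]])
       (simp add: cdiff_frechet_derivative_cscale[OF assms(2)])
qed

lemma cdiff_compose_Pair_fst:
  assumes "cdiff_at G (fst x, q x)" "cdiff_at q x"
  shows "cdiff_at (\<lambda>x. G (fst x, q x)) x"
proof -
  have inner: "((\<lambda>x. (fst x, q x)) has_derivative (\<lambda>v. (fst v, frechet_derivative q (at x) v))) (at x)"
    by (rule has_derivative_Pair[OF has_derivative_fst[OF has_derivative_ident] cdiff_has_derivative[OF assms(2)]])
  show ?thesis
    by (rule cdiffI[OF has_derivative_compose[OF inner cdiff_has_derivative[OF assms(1)]]])
       (simp add: cdiff_frechet_derivative_cscale[OF assms(2)]
         flip: cdiff_frechet_derivative_cscale[OF assms(1)] cscale_Pair)
qed

lemma cdiff_compose_line: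
  assumes P: "(P has_derivative (\<lambda>h. cscale h v)) (at w)" and G: "cdiff_at G (P w)"
  shows "((\<lambda>w. G (P w)) has_field_derivative frechet_derivative G (at (P w)) v) (at w)"
  unfolding has_field_derivative_def
  by (rule has_derivative_eq_rhs[OF has_derivative_compose[OF P cdiff_has_derivative[OF G]]])
     (simp add: fun_eq_iff cdiff_frechet_derivative_cscale[OF G] mult.commute)

lemma cdiff_has_field_derivative_last:
  assumes "cdiff_at G (X, L)"
  shows "((\<lambda>t. G (X, t)) has_field_derivative frechet_derivative G (at (X, L)) (0, 1)) (at L)"
proof -
  have "((\<lambda>t. (X, t)) has_derivative (\<lambda>h. cscale h (0, 1))) (at L)"
    by (rule has_derivative_eq_rhs[OF has_derivative_Pair[OF has_derivative_const has_derivative_ident]])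
       (auto simp: cscale_Pair vector_scalar_mult_def zero_vec_def)
  from cdiff_compose_line[OF this] assms show ?thesis by simp
qed

lemma cdiff_has_field_derivative_direction:
  assumes "cdiff_at G (y + cscale w v)"
  shows "((\<lambda>w. G (y + cscale w v)) has_field_derivative frechet_derivative G (at (y + cscale w v)) v) (at w)"
proof -
  have "((\<lambda>w. y + cscale w v) has_derivative (\<lambda>h. cscale h v)) (at w)"
    by (rule has_derivative_eq_rhs[OF has_derivative_add[OF has_derivative_const
          bounded_linear_imp_has_derivative[OF bounded_linear_cscale_left]]]) simp
  from cdiff_compose_line[OF this] assms show ?thesis by simp
qed

lemma hgerm_iff_eventually: "hgerm a g \<longleftrightarrow> (\<forall>\<^sub>F x in nhds a. cdiff_at g x)"
  unfolding hgerm_def holo_on_def eventually_nhds by blast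

section \<open>Continuity of the derivatives\<close>

lemma cdiff_directional_derivative_contour:
  assumes s: "0 < s" "s < r"
    and G: "\<And>w. norm w < r \<Longrightarrow> cdiff_at G (y + cscale w v)"
  shows "((\<lambda>u. G (y + cscale u v) / u\<^sup>2) has_contour_integral 2 * pi * \<i> * frechet_derivative G (at y) v)
           (circlepath 0 s)"
proof -
  have der: "((\<lambda>w. G (y + cscale w v)) has_field_derivative frechet_derivative G (at (y + cscale w v)) v) (at w)"
    if "norm w < r" for w
    using cdiff_has_field_derivative_direction[OF G[OF that]] .
  have hol: "(\<lambda>w. G (y + cscale w v)) holomorphic_on ball 0 r"
    unfolding holomorphic_on_def field_differentiable_def
    using der has_field_derivative_at_within mem_ball_0 by blast
  have "((\<lambda>u. G (y + cscale u v) / (u - 0) ^ Suc 1) has_contour_integral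
      (2 * pi * \<i>) / fact 1 * (deriv ^^ 1) (\<lambda>w. G (y + cscale w v)) 0) (circlepath 0 s)"
    by (rule Cauchy_has_contour_integral_higher_derivative_circlepath)
       (use hol s in \<open>auto intro!: holomorphic_on_imp_continuous_on elim!: holomorphic_on_subset\<close>)
  moreover have "(deriv ^^ 1) (\<lambda>w. G (y + cscale w v)) 0 = frechet_derivative G (at y) v"
    using DERIV_imp_deriv[OF der[of 0]] s by simp
  ultimately show ?thesis by (simp add: power2_eq_square)
qed

lemma norm_frechet_derivative_diff_le:
  assumes s: "0 < s" "s < r"
    and G: "\<And>w. norm w < r \<Longrightarrow> cdiff_at G (y + cscale w v)"
      "\<And>w. norm w < r \<Longrightarrow> cdiff_at G (y' + cscale w v)"
    and bound: "\<And>u. norm u = s \<Longrightarrow> norm (G (y + cscale u v) - G (y' + cscale u v)) \<le> B"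
  shows "norm (frechet_derivative G (at y) v - frechet_derivative G (at y') v) \<le> B / s"
proof -
  have "0 \<le> B"
    using order_trans[OF norm_ge_zero bound[of "complex_of_real s"]] s by simp
  have "((\<lambda>u. G (y + cscale u v) / u\<^sup>2 - G (y' + cscale u v) / u\<^sup>2) has_contour_integral
      2 * pi * \<i> * frechet_derivative G (at y) v - 2 * pi * \<i> * frechet_derivative G (at y') v)
      (circlepath 0 s)"
    by (intro has_contour_integral_diff cdiff_directional_derivative_contour[OF s] G)
  moreover have "norm (G (y + cscale u v) / u\<^sup>2 - G (y' + cscale u v) / u\<^sup>2) \<le> B / s\<^sup>2"
    if "norm (u - 0) = s" for u
    using bound[of u] that by (auto simp: norm_divide norm_power intro!: divide_right_mono simp flip: diff_divide_distrib)
  ultimately have "norm (2 * pi * \<i> * frechet_derivative G (at y) v - 2 * pi * \<i> * frechet_derivative G (at y') v)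
      \<le> B / s\<^sup>2 * (2 * pi * s)"
    using s \<open>0 \<le> B\<close> by (intro has_contour_integral_bound_circlepath) auto
  then have "2 * pi * norm (frechet_derivative G (at y) v - frechet_derivative G (at y') v)
      \<le> B / s\<^sup>2 * (2 * pi * s)"
    by (simp add: norm_mult flip: right_diff_distrib)
  also have "\<dots> = 2 * pi * (B / s)"
    using s by (simp add: power2_eq_square field_simps)
  finally show ?thesis
    by (rule mult_left_le_imp_le) simp
qed

lemma cscale_tube_in_ball:
  assumes "open U" "y0 \<in> U"
  obtains \<rho> r where "\<rho> > 0" "r > 0" "cball y0 (2 * \<rho>) \<subseteq> U"
    "\<And>y w. y \<in> ball y0 \<rho> \<Longrightarrow> norm (w::complex) < r \<Longrightarrow> y + cscale w v \<in> ball y0 (2 * \<rho>)"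
proof -
  obtain \<epsilon> where \<epsilon>: "\<epsilon> > 0" "cball y0 \<epsilon> \<subseteq> U"
    using open_contains_cball assms by blast
  define \<rho> where "\<rho> = \<epsilon> / 2"
  define r where "r = \<rho> / (norm v + 1)"
  have nv: "0 < norm v + 1" by (simp add: add_nonneg_pos)
  have \<rho>: "\<rho> > 0" "r > 0" using \<epsilon> nv by (simp_all add: \<rho>_def r_def)
  show ?thesis
  proof (rule that[OF \<rho>])
    show "cball y0 (2 * \<rho>) \<subseteq> U" using \<epsilon> by (simp add: \<rho>_def)
    fix y and w :: complex assume y: "y \<in> ball y0 \<rho>" and w: "norm w < r"
    have "norm w * norm v \<le> r * norm v" using w by (simp add: mult_right_mono)
    also have "\<dots> < \<rho>" using \<rho> nv by (simp add: r_def field_simps)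
    finally have "norm (cscale w v) < \<rho>" by (simp add: norm_cscale)
    then show "y + cscale w v \<in> ball y0 (2 * \<rho>)"
      using y norm_triangle_ineq[of "y - y0" "cscale w v"]
      by (simp add: dist_norm norm_minus_commute algebra_simps)
  qed
qed

lemma continuous_on_frechet_derivative_cdiff:
  assumes U: "open U" and G: "\<And>x. x \<in> U \<Longrightarrow> cdiff_at G x"
  shows "continuous_on U (\<lambda>y. frechet_derivative G (at y) v)"
proof -
  have "continuous (at y0) (\<lambda>y. frechet_derivative G (at y) v)" if "y0 \<in> U" for y0
  proof -
    obtain \<rho> r where \<rho>: "\<rho> > 0" "r > 0" "cball y0 (2 * \<rho>) \<subseteq> U"
      and line: "\<And>y w. y \<in> ball y0 \<rho> \<Longrightarrow> norm w < r \<Longrightarrow> y + cscale w v \<in> ball y0 (2 * \<rho>)"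
      using cscale_tube_in_ball[OF U \<open>y0 \<in> U\<close>] by metis
    have cdiff_line: "cdiff_at G (y + cscale w v)" if "y \<in> ball y0 \<rho>" "norm w < r" for y w
      using G line[OF that] \<rho>(3) ball_subset_cball by blast
    have "uniformly_continuous_on (cball y0 (2 * \<rho>)) G"
      using \<rho> G cdiff_isCont
      by (intro compact_uniformly_continuous compact_cball continuous_at_imp_continuous_on) blast
    show ?thesis
      unfolding continuous_at_eps_delta
    proof (intro allI impI)
      fix e :: real assume e: "e > 0"
      obtain d where d: "d > 0" "\<And>x x'. x \<in> cball y0 (2 * \<rho>) \<Longrightarrow> x' \<in> cball y0 (2 * \<rho>) \<Longrightarrow>
          dist x' x < d \<Longrightarrow> dist (G x') (G x) < e * (r / 2) / 2"
        using \<open>uniformly_continuous_on _ G\<close>[unfolded uniformly_continuous_on_def, rule_format,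
            of "e * (r / 2) / 2"] e \<rho> by auto
      show "\<exists>d>0. \<forall>y. dist y y0 < d \<longrightarrow>
          dist (frechet_derivative G (at y) v) (frechet_derivative G (at y0) v) < e"
      proof (intro exI[of _ "min d \<rho>"] conjI allI impI)
        show "min d \<rho> > 0" using d \<rho> by simp
        fix y assume y: "dist y y0 < min d \<rho>"
        have yb: "y \<in> ball y0 \<rho>" and y0b: "y0 \<in> ball y0 \<rho>" using y \<rho> by (auto simp: dist_commute)
        have "norm (G (y + cscale u v) - G (y0 + cscale u v)) \<le> e * (r / 2) / 2"
          if "norm u = r / 2" for u
        proof -
          have "norm u < r" using that \<rho> by simp
          then show ?thesis
            using d(2)[of "y0 + cscale u v" "y + cscale u v"] line[OF yb] line[OF y0b] y
            by (auto simp: dist_norm less_imp_le)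
        qed
        then have "norm (frechet_derivative G (at y) v - frechet_derivative G (at y0) v)
            \<le> e * (r / 2) / 2 / (r / 2)"
          using \<rho> by (intro norm_frechet_derivative_diff_le[of _ r] cdiff_line yb y0b) auto
        then show "dist (frechet_derivative G (at y) v) (frechet_derivative G (at y0) v) < e"
          using e \<rho> by (simp add: dist_norm)
      qed
    qed
  qed
  then show ?thesis using U by (simp add: continuous_on_eq_continuous_at)
qed

section \<open>Hadamard's lemma in the last variable\<close>

lemma cdiff_parametric_integral:
  fixes K :: "(complex^'m) \<times> complex \<Rightarrow> real \<Rightarrow> complex"
  assumes V: "open V" "convex V" "x \<in> V"
    and K_deriv: "\<And>y t. y \<in> V \<Longrightarrow> ((\<lambda>y. K y t) has_derivative K' y t) (at y)"
    and K'_cscale: "\<And>y t c v. y \<in> V \<Longrightarrow> K' y t (cscale c v) = c * K' y t v"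
    and K_cont: "\<And>y. y \<in> V \<Longrightarrow> continuous_on (cbox 0 1) (K y)"
    and K'_cont: "\<And>v. continuous_on (V \<times> cbox 0 1) (\<lambda>(y, t). K' y t v)"
  shows "cdiff_at (\<lambda>y. integral (cbox 0 1) (K y)) x"
proof -
  define L where "L y t = Blinfun (K' y t)" for y t
  have L_apply: "blinfun_apply (L y t) = K' y t" if "y \<in> V" for y t
    unfolding L_def
    using bounded_linear_Blinfun_apply has_derivative_bounded_linear K_deriv[OF that] by blast
  have L_cont: "continuous_on (V \<times> cbox 0 1) (\<lambda>(y, t). L y t)"
    by (rule continuous_on_blinfun_componentwise, rule continuous_on_eq[OF K'_cont])
       (auto simp: L_apply)
  have L_int: "L x integrable_on cbox 0 1"
    by (intro integrable_continuous continuous_on_compose2[OF L_cont, where f="\<lambda>t. (x, t)", simplified])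
       (use V in \<open>auto intro!: continuous_intros\<close>)
  have "((\<lambda>y. integral (cbox 0 1) (K y)) has_derivative integral (cbox 0 1) (L x)) (at x within V)"
    using V K_deriv L_apply integrable_continuous[OF K_cont]
    by (intro leibniz_rule[OF _ _ L_cont]) (auto simp: has_derivative_at_withinI)
  then show ?thesis
  proof (intro cdiffI)
    fix c v
    show "integral (cbox 0 1) (L x) (cscale c v) = c * integral (cbox 0 1) (L x) v"
      unfolding blinfun_apply_integral[OF L_int] L_apply[OF V(3)] K'_cscale[OF V(3)] by simp
  qed (use at_within_open[OF V(3,1)] in simp)
qed

lemma has_derivative_cauchy_kernel:
  assumes G: "cdiff_at G (fst y, w)" and w: "w \<noteq> snd y"
  shows "((\<lambda>y. G (fst y, w) / (w - snd y)) has_derivative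
           (\<lambda>v. frechet_derivative G (at (fst y, w)) (fst v, 0) / (w - snd y)
                + G (fst y, w) / (w - snd y)\<^sup>2 * snd v)) (at y)"
proof -
  have "((\<lambda>y. (fst y, w)) has_derivative (\<lambda>v. (fst v, 0))) (at y)"
    by (intro has_derivative_Pair has_derivative_fst has_derivative_ident has_derivative_const)
  from has_derivative_compose[OF this cdiff_has_derivative[OF G]]
  have "((\<lambda>y. G (fst y, w)) has_derivative (\<lambda>v. frechet_derivative G (at (fst y, w)) (fst v, 0))) (at y)" .
  moreover have "((\<lambda>y. w - snd y) has_derivative (\<lambda>v. - snd v)) (at y)"
    by (intro derivative_eq_intros) auto
  moreover have nz: "w - snd y \<noteq> 0" using w by simp
  ultimately show ?thesis
    by (rule has_derivative_eq_rhs[OF has_derivative_divide'])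
      (use nz in \<open>simp add: fun_eq_iff power2_eq_square add_divide_distrib diff_divide_distrib\<close>)
qed

lemma continuous_on_cauchy_kernel_derivative:
  fixes G :: "(complex^'m) \<times> complex \<Rightarrow> complex"
  assumes U: "open U" and G: "\<And>y. y \<in> U \<Longrightarrow> cdiff_at G y"
  shows "continuous_on {(y, w). (fst y, w) \<in> U \<and> w \<noteq> snd y}
           (\<lambda>(y, w). frechet_derivative G (at (fst y, w)) (fst v, 0) / (w - snd y)
                + G (fst y, w) / (w - snd y)\<^sup>2 * snd v)"
proof (intro continuous_at_imp_continuous_on ballI)
  fix p :: "((complex^'m) \<times> complex) \<times> complex"
  assume "p \<in> {(y, w). (fst y, w) \<in> U \<and> w \<noteq> snd y}"
  then have p: "(fst (fst p), snd p) \<in> U" "snd p \<noteq> snd (fst p)" by auto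
  have pair: "isCont (\<lambda>p::((complex^'m) \<times> complex) \<times> complex. (fst (fst p), snd p)) p"
    by (intro continuous_intros)
  have "isCont (\<lambda>y. frechet_derivative G (at y) (fst v, 0)) (fst (fst p), snd p)"
    using continuous_on_frechet_derivative_cdiff[OF U G] p(1) U
    by (simp add: continuous_on_eq_continuous_at)
  from isCont_o2[OF pair this]
  have "isCont (\<lambda>p. frechet_derivative G (at (fst (fst p), snd p)) (fst v, 0)) p" .
  moreover have "isCont (\<lambda>p. G (fst (fst p), snd p)) p"
    by (rule isCont_o2[OF pair cdiff_isCont[OF G[OF p(1)]]])
  ultimately show "isCont (\<lambda>(y, w). frechet_derivative G (at (fst y, w)) (fst v, 0) / (w - snd y)
      + G (fst y, w) / (w - snd y)\<^sup>2 * snd v) p"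
    unfolding split_beta using p(2) by (intro continuous_intros) auto
qed

lemma cdiff_integral_cauchy_kernel_circlepath:
  fixes G :: "(complex^'m) \<times> complex \<Rightarrow> complex"
  assumes U: "open U" and G: "\<And>y. y \<in> U \<Longrightarrow> cdiff_at G y"
    and V: "open V" "convex V" "x \<in> V"
    and V_circle: "\<And>y t. y \<in> V \<Longrightarrow> (fst y, circlepath 0 R t) \<in> U \<and> circlepath 0 R t \<noteq> snd y"
  shows "cdiff_at (\<lambda>y. integral (cbox 0 1) (\<lambda>t. G (fst y, circlepath 0 R t) / (circlepath 0 R t - snd y))) x"
proof -
  define \<gamma> where "\<gamma> = circlepath (0::complex) R"
  have \<gamma>_cont: "continuous_on S \<gamma>" for S
    unfolding \<gamma>_def circlepath by (intro continuous_intros)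
  define D where "D v = (\<lambda>(y, w). frechet_derivative G (at (fst y, w)) (fst v, 0) / (w - snd y)
      + G (fst y, w) / (w - snd y)\<^sup>2 * snd v)" for v
  show ?thesis
    unfolding \<gamma>_def[symmetric]
  proof (rule cdiff_parametric_integral[OF V, where K'="\<lambda>y t v. D v (y, \<gamma> t)"])
    fix y t assume y: "y \<in> V"
    show "((\<lambda>y. G (fst y, \<gamma> t) / (\<gamma> t - snd y)) has_derivative (\<lambda>v. D v (y, \<gamma> t))) (at y)"
      unfolding D_def split using V_circle[OF y, of t] G
      by (intro has_derivative_cauchy_kernel) (auto simp: \<gamma>_def)
    fix c v
    show "D (cscale c v) (y, \<gamma> t) = c * D v (y, \<gamma> t)"
      using V_circle[OF y, of t] G
        cdiff_frechet_derivative_cscale[where g=G and c=c and v="(fst v, 0)"]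
      by (simp add: D_def \<gamma>_def cscale_Pair algebra_simps)
  next
    fix y assume y: "y \<in> V"
    have "continuous_on U G"
      using G by (intro continuous_at_imp_continuous_on ballI cdiff_isCont) simp
    moreover have "continuous_on (cbox 0 1) (\<lambda>t. (fst y, \<gamma> t))"
      by (intro continuous_on_Pair continuous_on_const \<gamma>_cont)
    ultimately have "continuous_on (cbox 0 1) (\<lambda>t. G (fst y, \<gamma> t))"
      by (rule continuous_on_compose2) (use V_circle[OF y] in \<open>auto simp: \<gamma>_def\<close>)
    moreover have "continuous_on (cbox 0 1) (\<lambda>t. \<gamma> t - snd y)"
      by (intro continuous_on_diff continuous_on_const \<gamma>_cont)
    ultimately show "continuous_on (cbox 0 1) (\<lambda>t. G (fst y, \<gamma> t) / (\<gamma> t - snd y))"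
      using V_circle[OF y] by (intro continuous_on_divide) (auto simp: \<gamma>_def)
  next
    fix v
    have "continuous_on {(y, w). (fst y, w) \<in> U \<and> w \<noteq> snd y} (D v)"
      unfolding D_def using U G by (rule continuous_on_cauchy_kernel_derivative)
    moreover have "continuous_on (V \<times> cbox 0 1) (\<lambda>p. (fst p, \<gamma> (snd p)))"
      by (intro continuous_on_Pair continuous_on_fst continuous_on_id
          continuous_on_compose2[OF \<gamma>_cont[of UNIV] continuous_on_snd[OF continuous_on_id]]) auto
    ultimately show "continuous_on (V \<times> cbox 0 1) (\<lambda>(y, t). D v (y, \<gamma> t))"
      unfolding split_beta by (rule continuous_on_compose2) (use V_circle in \<open>auto simp: \<gamma>_def\<close>)
  qed
qed

lemma cdiff_circle_integral_last:
  fixes G :: "(complex^'m) \<times> complex \<Rightarrow> complex"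
  assumes G: "\<And>y. norm y < E \<Longrightarrow> cdiff_at G y"
    and x: "norm (fst x) + R < E" "norm (snd x) < R"
  shows "cdiff_at (\<lambda>y. contour_integral (circlepath 0 R) (\<lambda>w. G (fst y, w) / (w * (w - snd y)))) x"
proof -
  define \<gamma> where "\<gamma> = circlepath (0::complex) R"
  have R: "R > 0" using x(2) by (meson le_less_trans norm_ge_zero)
  have \<gamma>_norm: "norm (\<gamma> t) = R" for t
    using R by (simp add: \<gamma>_def circlepath norm_mult)
  define V where "V = ball x (min (E - R - norm (fst x)) (R - norm (snd x)))"
  have V: "open V" "convex V" "x \<in> V" using x by (auto simp: V_def)
  have V_circle: "(fst y, \<gamma> t) \<in> ball 0 E \<and> \<gamma> t \<noteq> snd y" if "y \<in> V" for y t
  proof -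
    have "dist (fst y) (fst x) \<le> dist y x" "dist (snd y) (snd x) \<le> dist y x"
      by (rule dist_fst_le dist_snd_le)+
    then have "norm (fst y) + R < E" "norm (snd y) < R"
      using that norm_triangle_ineq2[of "fst y" "fst x"] norm_triangle_ineq2[of "snd y" "snd x"]
      by (auto simp: V_def dist_commute dist_norm norm_minus_commute)
    then show ?thesis
      using norm_Pair_le[of "fst y" "\<gamma> t"] \<gamma>_norm[of t] by auto
  qed
  have "cdiff_at (\<lambda>y. integral (cbox 0 1) (\<lambda>t. G (fst y, \<gamma> t) / (\<gamma> t - snd y))) x"
    unfolding \<gamma>_def using G V_circle
    by (intro cdiff_integral_cauchy_kernel_circlepath[OF open_ball[of 0 E] _ V]) (auto simp: \<gamma>_def)
  then have "cdiff_at (\<lambda>y. 2 * pi * \<i> * integral (cbox 0 1) (\<lambda>t. G (fst y, \<gamma> t) / (\<gamma> t - snd y))) x"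
    by (intro cdiff_mult cdiff_const)
  moreover have "2 * pi * \<i> * integral (cbox 0 1) (\<lambda>t. G (fst y, \<gamma> t) / (\<gamma> t - snd y))
      = contour_integral \<gamma> (\<lambda>w. G (fst y, w) / (w * (w - snd y)))" if y: "y \<in> V" for y
    unfolding contour_integral_integral cbox_interval integral_mult_right[symmetric]
  proof (rule integral_cong)
    fix t
    have "\<gamma> t \<noteq> 0" using \<gamma>_norm[of t] R by auto
    moreover have "vector_derivative \<gamma> (at t) = 2 * pi * \<i> * \<gamma> t"
      using vector_derivative_circlepath[of 0 R t] by (simp add: \<gamma>_def circlepath)
    ultimately show "2 * pi * \<i> * (G (fst y, \<gamma> t) / (\<gamma> t - snd y))
        = G (fst y, \<gamma> t) / (\<gamma> t * (\<gamma> t - snd y)) * vector_derivative \<gamma> (at t)"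
      using V_circle[OF y, of t] by (simp add: field_simps)
  qed
  ultimately show ?thesis
    using V by (auto simp: \<gamma>_def intro: cdiff_transform_open)
qed

lemma contour_integral_circlepath_div_difference:
  fixes f :: "complex \<Rightarrow> complex"
  assumes f: "f holomorphic_on ball 0 r" and R: "R < r" and L: "L \<noteq> 0" "norm L < R"
  shows "contour_integral (circlepath 0 R) (\<lambda>w. f w / (w * (w - L))) = 2 * pi * \<i> * (f L - f 0) / L"
proof -
  have R0: "0 < R" using L by (meson le_less_trans norm_ge_zero)
  have sub: "cball 0 R \<subseteq> ball 0 r" using R by auto
  have cont: "continuous_on (cball 0 R) f"
    by (rule holomorphic_on_imp_continuous_on[OF holomorphic_on_subset[OF f sub]])
  have hol: "f holomorphic_on ball 0 R"
    by (rule holomorphic_on_subset[OF f]) (use sub in auto)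
  have "((\<lambda>w. f w / (w - L)) has_contour_integral 2 * of_real pi * \<i> * f L) (circlepath 0 R)"
    by (rule Cauchy_integral_circlepath[OF cont hol]) (use L in simp)
  moreover have "((\<lambda>w. f w / (w - 0)) has_contour_integral 2 * of_real pi * \<i> * f 0) (circlepath 0 R)"
    by (rule Cauchy_integral_circlepath[OF cont hol]) (use R0 in simp)
  ultimately have "((\<lambda>w. (f w / (w - L) - f w / (w - 0)) / L) has_contour_integral
      (2 * of_real pi * \<i> * f L - 2 * of_real pi * \<i> * f 0) / L) (circlepath 0 R)"
    by (intro has_contour_integral_div has_contour_integral_diff)
  then have "((\<lambda>w. f w / (w * (w - L))) has_contour_integral
      (2 * of_real pi * \<i> * f L - 2 * of_real pi * \<i> * f 0) / L) (circlepath 0 R)"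
  proof (rule has_contour_integral_eq)
    fix w assume "w \<in> path_image (circlepath 0 R)"
    then have "w \<noteq> 0" "w - L \<noteq> 0" using R0 L by auto
    then show "(f w / (w - L) - f w / (w - 0)) / L = f w / (w * (w - L))"
      using L by (simp add: field_simps)
  qed
  then show ?thesis
    by (simp add: contour_integral_unique right_diff_distrib)
qed

lemma eq_snd_mult_circle_integral:
  fixes G :: "(complex^'m) \<times> complex \<Rightarrow> complex"
  assumes G: "\<And>y. norm y < E \<Longrightarrow> cdiff_at G y" and G0: "\<And>X. norm X < E \<Longrightarrow> G (X, 0) = 0"
    and x: "norm (fst x) < E / 4" "norm (snd x) < E / 4"
  shows "G x = snd x * (contour_integral (circlepath 0 (E / 2)) (\<lambda>w. G (fst x, w) / (w * (w - snd x)))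
                          / (2 * pi * \<i>))"
proof -
  have "0 < E" using x norm_ge_zero[of "fst x"] by linarith
  have "G (fst x, 0) = 0" using x \<open>0 < E\<close> by (intro G0) linarith
  show ?thesis
  proof (cases "snd x = 0")
    case True
    then show ?thesis using \<open>G (fst x, 0) = 0\<close> by (cases x) simp
  next
    case False
    have "(\<lambda>w. G (fst x, w)) holomorphic_on ball 0 (3 * E / 4)"
      unfolding holomorphic_on_def
    proof
      fix w :: complex assume w: "w \<in> ball 0 (3 * E / 4)"
      have "norm (fst x, w) < E"
        using norm_Pair_le[of "fst x" w] x w by simp
      from cdiff_has_field_derivative_last[OF G[OF this]]
      show "(\<lambda>w. G (fst x, w)) field_differentiable at w within ball 0 (3 * E / 4)"
        using field_differentiable_at_within field_differentiable_def by blast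
    qed
    from contour_integral_circlepath_div_difference[OF this _ False, where R="E / 2"]
    show ?thesis
      using x False \<open>0 < E\<close> \<open>G (fst x, 0) = 0\<close> by (simp add: field_simps)
  qed
qed

lemma hadamard_division_last:
  fixes G :: "(complex^'m) \<times> complex \<Rightarrow> complex"
  assumes G: "hgerm 0 G" and G0: "\<forall>\<^sub>F X in nhds 0. G (X, 0) = 0"
  shows "\<exists>B. hgerm 0 B \<and> (\<forall>\<^sub>F x in nhds 0. G x = snd x * B x)"
proof -
  obtain E where E: "E > 0" "\<And>y. norm y < E \<Longrightarrow> cdiff_at G y" "\<And>X. norm X < E \<Longrightarrow> G (X, 0) = 0"
  proof -
    obtain E1 where "E1 > 0" "\<And>y. dist y 0 < E1 \<Longrightarrow> cdiff_at G y"
      using G[unfolded hgerm_iff_eventually eventually_nhds_metric] by blast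
    moreover obtain E2 where "E2 > 0" "\<And>X. dist X 0 < E2 \<Longrightarrow> G (X, 0) = 0"
      using G0[unfolded eventually_nhds_metric] by blast
    ultimately show ?thesis
      by (intro that[of "min E1 E2"]) auto
  qed
  define B where "B x = contour_integral (circlepath 0 (E / 2)) (\<lambda>w. G (fst x, w) / (w * (w - snd x)))
      / (2 * pi * \<i>)" for x
  define V where "V = ball (0::(complex^'m) \<times> complex) (E / 4)"
  have V: "norm (fst x) < E / 4" "norm (snd x) < E / 4" if "x \<in> V" for x
    using that norm_fst_le[of "fst x" "snd x"] norm_snd_le[of "snd x" "fst x"] by (simp_all add: V_def)
  have "cdiff_at B x" if "x \<in> V" for x
  proof -
    have "cdiff_at (\<lambda>x. contour_integral (circlepath 0 (E / 2)) (\<lambda>w. G (fst x, w) / (w * (w - snd x)))) x"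
      using V[OF that] E by (intro cdiff_circle_integral_last[of E G]) auto
    then show ?thesis
      unfolding B_def divide_inverse by (intro cdiff_mult cdiff_const)
  qed
  then have "hgerm 0 B"
    unfolding hgerm_def holo_on_def using E by (intro exI[of _ V]) (auto simp: V_def)
  moreover have "G x = snd x * B x" if "x \<in> V" for x
    unfolding B_def using E V[OF that] by (intro eq_snd_mult_circle_integral)
  ultimately show ?thesis
    using E unfolding eventually_nhds by (intro exI[of _ B] conjI exI[of _ V]) (auto simp: V_def)
qed

section \<open>Holomorphic functions of one variable vanishing at a point\<close>

text \<open>If \<open>\<phi> = (z - z0)^n u\<close> with \<open>u z0 \<noteq> 0\<close>, then
  \<open>\<phi>' = (z - z0)^(n - 1) (n u + (z - z0) u')\<close>, and the second factor does not vanish near \<open>z0\<close>.\<close>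
lemma eq_deriv_mult_of_zero_order:
  fixes \<phi> g0 :: "complex \<Rightarrow> complex"
  assumes n: "0 < n" and r: "0 < r" and g0: "g0 holomorphic_on ball z0 r" "g0 z0 \<noteq> 0"
    and \<phi>: "\<And>w. w \<in> ball z0 r \<Longrightarrow> \<phi> w = (w - z0) ^ n * g0 w"
  shows "\<exists>g s. s > 0 \<and> g holomorphic_on ball z0 s \<and> (\<forall>z\<in>ball z0 s. \<phi> z = deriv \<phi> z * g z)"
proof -
  define d where "d w = of_nat n * g0 w + (w - z0) * deriv g0 w" for w
  have d_hol: "d holomorphic_on ball z0 r"
    unfolding d_def using g0(1) by (intro holomorphic_intros holomorphic_deriv) auto
  have deriv_\<phi>: "deriv \<phi> w = (w - z0) ^ (n - 1) * d w" if w: "w \<in> ball z0 r" for w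
  proof -
    have "(g0 has_field_derivative deriv g0 w) (at w)"
      using g0(1) w by (meson DERIV_deriv_iff_field_differentiable holomorphic_on_imp_differentiable_at open_ball)
    then have "((\<lambda>w. (w - z0) ^ n * g0 w) has_field_derivative
        of_nat n * (w - z0) ^ (n - 1) * g0 w + (w - z0) ^ n * deriv g0 w) (at w)"
      by (auto intro!: derivative_eq_intros)
    then have "(\<phi> has_field_derivative of_nat n * (w - z0) ^ (n - 1) * g0 w + (w - z0) ^ n * deriv g0 w) (at w)"
      by (rule has_field_derivative_transform_within_open[OF _ open_ball w]) (simp add: \<phi>)
    moreover have "(w - z0) ^ n = (w - z0) ^ (n - 1) * (w - z0)"
      using n by (metis Suc_diff_1 power_Suc2)
    ultimately show ?thesis
      by (simp add: DERIV_imp_deriv d_def algebra_simps)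
  qed
  have "continuous (at z0) d"
    using holomorphic_on_imp_continuous_on[OF d_hol] r by (simp add: continuous_on_eq_continuous_at)
  moreover have "d z0 \<noteq> 0" using n g0(2) by (simp add: d_def)
  ultimately obtain e where e: "e > 0" "\<And>w. dist z0 w < e \<Longrightarrow> d w \<noteq> 0"
    using continuous_at_avoid by blast
  define s where "s = min r e"
  have s: "s > 0" "ball z0 s \<subseteq> ball z0 r" using e r by (auto simp: s_def)
  have d_nz: "d w \<noteq> 0" if "w \<in> ball z0 s" for w using e(2)[of w] that by (simp add: s_def)
  show ?thesis
  proof (intro exI[of _ "\<lambda>w. (w - z0) * g0 w / d w"] exI[of _ s] conjI ballI)
    show "(\<lambda>w. (w - z0) * g0 w / d w) holomorphic_on ball z0 s"
      using d_nz
      by (intro holomorphic_intros holomorphic_on_subset[OF g0(1) s(2)] holomorphic_on_subset[OF d_hol s(2)]) auto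
    fix z assume z: "z \<in> ball z0 s"
    have zr: "z \<in> ball z0 r" using z s(2) by blast
    have "(z - z0) ^ n = (z - z0) ^ (n - 1) * (z - z0)"
      using n by (metis Suc_diff_1 power_Suc2)
    then show "\<phi> z = deriv \<phi> z * ((z - z0) * g0 z / d z)"
      using d_nz[OF z] by (simp add: \<phi>[OF zr] deriv_\<phi>[OF zr])
  qed (use s in auto)
qed

lemma holomorphic_eq_deriv_mult:
  fixes \<phi> :: "complex \<Rightarrow> complex"
  assumes \<phi>: "\<phi> holomorphic_on U" "open U" "z0 \<in> U" "\<phi> z0 = 0"
  shows "\<exists>g r. r > 0 \<and> g holomorphic_on ball z0 r \<and> (\<forall>z\<in>ball z0 r. \<phi> z = deriv \<phi> z * g z)"
proof -
  obtain r where r: "r > 0" "ball z0 r \<subseteq> U" using open_contains_ball \<phi> by blast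
  have hol: "\<phi> holomorphic_on ball z0 r" using \<phi>(1) r(2) by (rule holomorphic_on_subset)
  show ?thesis
  proof (cases "\<phi> constant_on ball z0 r")
    case True
    then have "\<phi> z = 0" if "z \<in> ball z0 r" for z
      using that r \<phi>(4) by (metis centre_in_ball constant_on_def)
    then show ?thesis
      using r by (intro exI[of _ "\<lambda>_. 0"] exI[of _ r]) auto
  next
    case False
    from holomorphic_factor_zero_nonconstant[OF hol open_ball connected_ball _ \<phi>(4) False] r(1)
    obtain g0 s n where "0 < n" "0 < s" "g0 holomorphic_on ball z0 s"
      "\<And>w. w \<in> ball z0 s \<Longrightarrow> \<phi> w = (w - z0) ^ n * g0 w" "\<And>w. w \<in> ball z0 s \<Longrightarrow> g0 w \<noteq> 0"
      by (metis centre_in_ball)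
    then show ?thesis
      by (intro eq_deriv_mult_of_zero_order[of n s g0 z0]) auto
  qed
qed

section \<open>Pulling back along the base change\<close>

definition base_change :: "(complex \<Rightarrow> complex) \<Rightarrow> (complex^'m) \<times> complex \<Rightarrow> (complex^'m) \<times> complex" where
  "base_change \<phi> x = (fst x, \<phi> (snd x))"

definition lift_field :: "(complex \<Rightarrow> complex) \<Rightarrow> ((complex^'p) \<times> complex \<Rightarrow> (complex^'p) \<times> complex)
    \<Rightarrow> (complex^'p) \<times> complex \<Rightarrow> (complex^'p) \<times> complex" where
  "lift_field \<phi> \<eta> x = (deriv \<phi> (snd x) *s fst (\<eta> (base_change \<phi> x)), snd (\<eta> (base_change \<phi> x)))"

lemma cdiff_compose_base_change:
  "cdiff_at G (base_change \<phi> x) \<Longrightarrow> \<phi> field_differentiable at (snd x) \<Longrightarrow>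
    cdiff_at (\<lambda>x. G (base_change \<phi> x)) x"
  unfolding base_change_def by (rule cdiff_compose_Pair_fst[OF _ cdiff_compose_field[OF _ cdiff_snd]])

lemma eventually_nhds_snd:
  "eventually P (nhds (snd a)) \<Longrightarrow> \<forall>\<^sub>F x in nhds a. P (snd x)"
  using tendsto_snd[OF filterlim_ident] unfolding filterlim_iff by blast

lemma eventually_nhds_base_change:
  fixes \<phi> :: "complex \<Rightarrow> complex"
  assumes "isCont \<phi> 0" "\<phi> 0 = 0" "eventually P (nhds (0::(complex^'m) \<times> complex))"
  shows "\<forall>\<^sub>F x in nhds 0. P (base_change \<phi> x)"
proof -
  have "isCont (\<lambda>x::(complex^'m) \<times> complex. \<phi> (snd x)) 0"
    using assms(1) by (intro isCont_o2[where f=snd and g=\<phi>] continuous_intros) simp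
  then have "isCont (\<lambda>x::(complex^'m) \<times> complex. (fst x, \<phi> (snd x))) 0"
    by (intro continuous_intros)
  then have "(base_change \<phi> \<longlongrightarrow> 0) (nhds (0::(complex^'m) \<times> complex))"
    unfolding tendsto_nhds_iff isCont_def base_change_def using assms(2) by (simp add: zero_prod_def)
  then show ?thesis
    using assms(3) unfolding filterlim_iff by blast
qed

lemma hgerm_const: "hgerm a (\<lambda>_. c)"
  unfolding hgerm_iff_eventually by (intro always_eventually allI cdiff_const)

lemma hgerm_mult: "hgerm a f \<Longrightarrow> hgerm a g \<Longrightarrow> hgerm a (\<lambda>x. f x * g x)"
  unfolding hgerm_iff_eventually by (auto elim: eventually_elim2 intro: cdiff_mult)

lemma hgerm_compose_snd:
  assumes "g holomorphic_on U" "open U" "snd a \<in> U"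
  shows "hgerm a (\<lambda>x. g (snd x))"
proof -
  have "\<forall>\<^sub>F z in nhds (snd a). g field_differentiable at z"
    using assms by (intro eventually_nhds_in_open[THEN eventually_mono])
      (auto intro: holomorphic_on_imp_differentiable_at)
  then show ?thesis
    unfolding hgerm_iff_eventually
    by (rule eventually_nhds_snd[THEN eventually_mono]) (rule cdiff_compose_field[OF _ cdiff_snd])
qed

lemma eventually_field_differentiable_snd:
  assumes "\<phi> holomorphic_on U" "open U" "snd a \<in> U"
  shows "\<forall>\<^sub>F x in nhds a. \<phi> field_differentiable at (snd x)"
  using assms
  by (intro eventually_nhds_snd eventually_nhds_in_open[THEN eventually_mono])
     (auto intro: holomorphic_on_imp_differentiable_at)

lemma hgerm_compose_base_change:
  assumes \<phi>: "\<phi> holomorphic_on U" "open U" "0 \<in> U" "\<phi> 0 = 0" and G: "hgerm 0 G"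
  shows "hgerm 0 (\<lambda>x. G (base_change \<phi> x))"
proof -
  have "isCont \<phi> 0"
    using \<phi> holomorphic_on_imp_continuous_on continuous_on_eq_continuous_at by blast
  then have "\<forall>\<^sub>F x in nhds 0. cdiff_at G (base_change \<phi> x)"
    using \<phi>(4) G unfolding hgerm_iff_eventually by (rule eventually_nhds_base_change)
  moreover have "\<forall>\<^sub>F x in nhds 0. \<phi> field_differentiable at (snd x)"
    using \<phi> by (intro eventually_field_differentiable_snd) auto
  ultimately show ?thesis
    unfolding hgerm_iff_eventually by eventually_elim (rule cdiff_compose_base_change)
qed

lemma pdX_compose_base_change:
  "pdX (\<lambda>x. H (base_change \<phi> x)) i x = pdX H i (base_change \<phi> x)"
  by (simp add: pdX_def base_change_def cong: if_cong)

lemma pdL_compose_base_change: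
  assumes H: "cdiff_at H (base_change \<phi> x)" and \<phi>: "\<phi> field_differentiable at (snd x)"
  shows "pdL (\<lambda>x. H (base_change \<phi> x)) x = deriv \<phi> (snd x) * pdL H (base_change \<phi> x)"
proof -
  have "((\<lambda>t. H (fst x, t)) has_field_derivative pdL H (base_change \<phi> x)) (at (\<phi> (snd x)))"
    using cdiff_has_field_derivative_last[of H "fst x" "\<phi> (snd x)"] H
    by (simp add: pdL_def base_change_def DERIV_imp_deriv)
  moreover have "(\<phi> has_field_derivative deriv \<phi> (snd x)) (at (snd x))"
    using \<phi> by (simp add: DERIV_deriv_iff_field_differentiable)
  ultimately have "((\<lambda>t. H (fst x, \<phi> t)) has_field_derivative
      pdL H (base_change \<phi> x) * deriv \<phi> (snd x)) (at (snd x))"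
    by (rule DERIV_chain2)
  then show ?thesis
    unfolding pdL_def[of "\<lambda>x. H (base_change \<phi> x)"] by (simp add: DERIV_imp_deriv base_change_def mult.commute)
qed

lemma vf_act_compose_base_change:
  assumes "cdiff_at H (base_change \<phi> x)" "\<phi> field_differentiable at (snd x)"
    and "fst (\<xi> x) = c *s fst (\<eta> (base_change \<phi> x))"
    and "deriv \<phi> (snd x) * snd (\<xi> x) = c * snd (\<eta> (base_change \<phi> x))"
  shows "vf_act \<xi> (\<lambda>x. H (base_change \<phi> x)) x = c * vf_act \<eta> H (base_change \<phi> x)"
  using assms
  by (simp add: vf_act_def pdX_compose_base_change pdL_compose_base_change sum_distrib_left
      vector_scalar_mult_def algebra_simps)

lemma Derlog_compose_base_change:
  assumes \<phi>: "\<phi> holomorphic_on U" "open U" "0 \<in> U" "\<phi> 0 = 0"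
    and H: "hgerm 0 H" and \<eta>: "Derlog H \<eta>"
    and \<xi>: "hvgerm 0 \<xi>" and c: "hgerm 0 c"
    and \<xi>_\<eta>: "\<forall>\<^sub>F x in nhds 0. fst (\<xi> x) = c x *s fst (\<eta> (base_change \<phi> x))
                 \<and> deriv \<phi> (snd x) * snd (\<xi> x) = c x * snd (\<eta> (base_change \<phi> x))"
  shows "Derlog (\<lambda>x. H (base_change \<phi> x)) \<xi>"
proof -
  obtain a where a: "hgerm 0 a" "\<forall>\<^sub>F y in nhds 0. vf_act \<eta> H y = a y * H y"
    using \<eta> by (auto simp: Derlog_def)
  have "isCont \<phi> 0"
    using \<phi> holomorphic_on_imp_continuous_on continuous_on_eq_continuous_at by blast
  then have "\<forall>\<^sub>F x in nhds 0. cdiff_at H (base_change \<phi> x)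
      \<and> vf_act \<eta> H (base_change \<phi> x) = a (base_change \<phi> x) * H (base_change \<phi> x)"
    using \<phi>(4) H a(2) unfolding hgerm_iff_eventually
    by (intro eventually_nhds_base_change eventually_conj)
  moreover have "\<forall>\<^sub>F x in nhds 0. \<phi> field_differentiable at (snd x)"
    using \<phi> by (intro eventually_field_differentiable_snd) auto
  ultimately have "\<forall>\<^sub>F x in nhds 0. vf_act \<xi> (\<lambda>x. H (base_change \<phi> x)) x
      = (c x * a (base_change \<phi> x)) * H (base_change \<phi> x)"
    using \<xi>_\<eta> by eventually_elim (simp add: vf_act_compose_base_change)
  moreover have "hgerm 0 (\<lambda>x. c x * a (base_change \<phi> x))"
    using \<phi> c a(1) by (intro hgerm_mult hgerm_compose_base_change)
  ultimately show ?thesis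
    using \<xi> unfolding Derlog_def by blast
qed

lemma Derlog_lift_field:
  assumes \<phi>: "\<phi> holomorphic_on U" "open U" "0 \<in> U" "\<phi> 0 = 0"
    and H: "hgerm 0 H" and \<eta>: "Derlog H \<eta>"
  shows "Derlog (\<lambda>x. H (base_change \<phi> x)) (lift_field \<phi> \<eta>)"
proof -
  have \<phi>': "hgerm 0 (\<lambda>x. deriv \<phi> (snd x))"
    using \<phi> by (intro hgerm_compose_snd[of _ U] holomorphic_deriv) auto
  have "hvgerm 0 \<eta>" using \<eta> by (simp add: Derlog_def)
  then have "hvgerm 0 (lift_field \<phi> \<eta>)"
    unfolding hvgerm_def lift_field_def vector_scalar_mult_def
    using \<phi> \<phi>' by (auto intro!: hgerm_mult hgerm_compose_base_change)
  then show ?thesis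
    by (rule Derlog_compose_base_change[OF \<phi> H \<eta> _ \<phi>']) (simp add: lift_field_def)
qed

lemma Derlog_lift_field_divided:
  assumes \<phi>: "\<phi> holomorphic_on U" "open U" "0 \<in> U" "\<phi> 0 = 0"
    and H: "hgerm 0 H" and \<eta>: "Derlog H \<eta>"
    and tangent: "\<forall>\<^sub>F X in nhds 0. snd (\<eta> (X, 0)) = 0"
  shows "\<exists>\<xi>. (\<forall>\<^sub>F x in nhds 0. lift_field \<phi> \<eta> x = cscale (deriv \<phi> (snd x)) (\<xi> x))
             \<and> Derlog (\<lambda>x. H (base_change \<phi> x)) \<xi>"
proof -
  have \<eta>_germ: "hvgerm 0 \<eta>" using \<eta> by (simp add: Derlog_def)
  obtain b where b: "hgerm 0 b" "\<forall>\<^sub>F y in nhds 0. snd (\<eta> y) = snd y * b y"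
    using hadamard_division_last[OF _ tangent] \<eta>_germ by (auto simp: hvgerm_def)
  obtain g r where g: "r > 0" "g holomorphic_on ball 0 r" "\<forall>z\<in>ball 0 r. \<phi> z = deriv \<phi> z * g z"
    using holomorphic_eq_deriv_mult[OF \<phi>] by blast
  define \<xi> where "\<xi> x = (fst (\<eta> (base_change \<phi> x)), g (snd x) * b (base_change \<phi> x))" for x
  have "isCont \<phi> 0"
    using \<phi> holomorphic_on_imp_continuous_on continuous_on_eq_continuous_at by blast
  have "\<forall>\<^sub>F x in nhds 0. snd (\<eta> (base_change \<phi> x)) = \<phi> (snd x) * b (base_change \<phi> x)"
    using eventually_nhds_base_change[OF \<open>isCont \<phi> 0\<close> \<phi>(4) b(2)]
    by (simp add: base_change_def)
  moreover have "\<forall>\<^sub>F x in nhds 0. snd x \<in> ball 0 r"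
    using g(1) by (intro eventually_nhds_snd eventually_nhds_in_open) auto
  ultimately have \<xi>_snd: "\<forall>\<^sub>F x in nhds 0.
      deriv \<phi> (snd x) * snd (\<xi> x) = snd (\<eta> (base_change \<phi> x))"
    by eventually_elim (use g(3) in \<open>simp add: \<xi>_def\<close>)
  have "hvgerm 0 \<xi>"
    using \<eta>_germ \<phi> g b(1) unfolding hvgerm_def \<xi>_def
    by (auto intro!: hgerm_mult hgerm_compose_base_change hgerm_compose_snd[of g "ball 0 r"])
  then have "Derlog (\<lambda>x. H (base_change \<phi> x)) \<xi>"
    by (rule Derlog_compose_base_change[OF \<phi> H \<eta> _ hgerm_const[of 0 1]]) (use \<xi>_snd in \<open>simp add: \<xi>_def\<close>)
  moreover have "\<forall>\<^sub>F x in nhds 0. lift_field \<phi> \<eta> x = cscale (deriv \<phi> (snd x)) (\<xi> x)"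
    using \<xi>_snd by eventually_elim (simp add: lift_field_def cscale_eq \<xi>_def)
  ultimately show ?thesis by blast
qed

theorem mainTheorem2:
  fixes S :: "(complex^'n) set"
    and fam :: "complex^'n \<Rightarrow> complex \<Rightarrow> complex^'p"
    and \<phi> :: "complex \<Rightarrow> complex"
    and H :: "(complex^'p) \<times> complex \<Rightarrow> complex"
    and \<eta> :: "(complex^'p) \<times> complex \<Rightarrow> (complex^'p) \<times> complex"
  assumes S: "finite S" "S \<noteq> {}"
    and f_germ: "\<forall>s\<in>S. hvgerm (s, 0) (unf fam) \<and> fam s 0 = 0"
    and F_stable: "stable_multigerm S (unf fam)"
    and phi: "\<exists>U. open U \<and> 0 \<in> U \<and> \<phi> holomorphic_on U" "\<phi> 0 = 0"
    and H: "defining_eq_disc S (unf fam) H"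
    and eta: "Derlog H \<eta>"
  shows "Derlog (\<lambda>(X, Z). H (X, \<phi> Z))
           (\<lambda>(X, Z). ((\<chi> i. fst (\<eta> (X, \<phi> Z)) $ i * deriv \<phi> Z), snd (\<eta> (X, \<phi> Z))))
       \<and> ((\<forall>\<^sub>F X in nhds 0. snd (\<eta> (X, 0)) = 0) \<longrightarrow>
          (\<exists>\<xi>. (\<forall>\<^sub>F x in nhds 0.
                   (case x of (X, Z) \<Rightarrow> ((\<chi> i. fst (\<eta> (X, \<phi> Z)) $ i * deriv \<phi> Z), snd (\<eta> (X, \<phi> Z))))
                   = cscale (deriv \<phi> (snd x)) (\<xi> x))
               \<and> Derlog (\<lambda>(X, Z). H (X, \<phi> Z)) \<xi>))"
proof -
  obtain U where U: "\<phi> holomorphic_on U" "open U" "0 \<in> U"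
    using phi(1) by blast
  have "hgerm 0 H"
    using H by (simp add: defining_eq_disc_def)
  have h: "(\<lambda>(X, Z). H (X, \<phi> Z)) = (\<lambda>x. H (base_change \<phi> x))"
    by (simp add: fun_eq_iff base_change_def)
  have \<eta>_lift: "(\<lambda>(X, Z). ((\<chi> i. fst (\<eta> (X, \<phi> Z)) $ i * deriv \<phi> Z), snd (\<eta> (X, \<phi> Z))))
      = lift_field \<phi> \<eta>"
    by (simp add: fun_eq_iff lift_field_def base_change_def vector_scalar_mult_def mult.commute)
  show ?thesis
    unfolding h \<eta>_lift
    using Derlog_lift_field[OF U phi(2) \<open>hgerm 0 H\<close> eta]
      Derlog_lift_field_divided[OF U phi(2) \<open>hgerm 0 H\<close> eta] by blast
qed

end
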